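(* Fix $0<\delta<1$, let $\epsilon=\frac12+\frac\delta2$, $\epsilon'=\frac12$, $c=\frac8\delta$, and let $k_n=\lceil 2^{\sqrt n}\rceil$. For all sufficiently large even $n$ there exists a subset $\mathcal M_n\subseteq\mathcal G_n$ with $|\mathcal M_n|\le k_n$ such that there is no graph $U$ with at most $2^{n^{\frac12-\delta}}$ vertices containing every graph of $\mathcal M_n$ as an induced subgraph.
   Context: For even $n$, a good graph on $n$ vertices is a bipartite graph with vertex set $[n]$ and parts $\{1,\dots,\frac n2\}$ and $\{\frac n2+1,\dots,n\}$, having exactly $\lfloor(\frac n2)^{2-\epsilon}\rfloor$ edges, such that every induced subgraph with at most $(\frac n2)^{\epsilon'}$ vertices has a vertex of degree less than $c$ (within that subgraph). $\mathcal G_n$ denotes the set of good graphs on $n$ vertices. A graph $F$ is contained in $U$ as an induced subgraph if there is an injection $\pi:V(F)\to V(U)$ with $xy\in E(F)\iff\pi(x)\pi(y)\in E(U)$. *)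

theory Defs
  imports Complex_Main
begin

text \<open>A graph on vertex set [n] = {1..n} is given by its edge set, a set of 2-element sets.\<close>

definition bip_edges :: "nat \<Rightarrow> nat set set" where
  "bip_edges n = {{u, v} | u v. u \<in> {1..n div 2} \<and> v \<in> {n div 2 + 1..n}}"

definition good_graph :: "real \<Rightarrow> real \<Rightarrow> real \<Rightarrow> nat \<Rightarrow> nat set set \<Rightarrow> bool" where
  "good_graph eps eps' c n E \<longleftrightarrow>
     E \<subseteq> bip_edges n \<and>
     int (card E) = \<lfloor>(real n / 2) powr (2 - eps)\<rfloor> \<and>
     (\<forall>S \<subseteq> {1..n}. S \<noteq> {} \<and> real (card S) \<le> (real n / 2) powr eps' \<longrightarrow>
        (\<exists>v\<in>S. real (card {u\<in>S. {u, v} \<in> E}) < c))"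

definition good_graphs :: "real \<Rightarrow> real \<Rightarrow> real \<Rightarrow> nat \<Rightarrow> nat set set set" where
  "good_graphs eps eps' c n = {E. good_graph eps eps' c n E}"

definition simple_graph :: "nat set \<Rightarrow> nat set set \<Rightarrow> bool" where
  "simple_graph V EU \<longleftrightarrow> finite V \<and> EU \<subseteq> {{x, y} | x y. x \<in> V \<and> y \<in> V \<and> x \<noteq> y}"

definition induced_sub :: "nat \<Rightarrow> nat set set \<Rightarrow> nat set \<Rightarrow> nat set set \<Rightarrow> bool" where
  "induced_sub n E V EU \<longleftrightarrow>
     (\<exists>\<pi>. inj_on \<pi> {1..n} \<and> \<pi> ` {1..n} \<subseteq> V \<and>
        (\<forall>x\<in>{1..n}. \<forall>y\<in>{1..n}. x \<noteq> y \<longrightarrow> ({x, y} \<in> E \<longleftrightarrow> {\<pi> x, \<pi> y} \<in> EU)))"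

end

theory Submission
  imports Defs "HOL-Library.FuncSet" "HOL-Real_Asymp.Real_Asymp"
begin

text \<open>Write \<open>n = 2 * m\<close>, \<open>e = \<lfloor>m powr (3/2 - \<delta>/2)\<rfloor>\<close> and \<open>c = \<lceil>8/\<delta>\<rceil>\<close>. At most half of
  the bipartite graphs with \<open>e\<close> edges contain a set \<open>S\<close> of at most \<open>\<surd>m\<close> vertices in which every
  vertex has \<open>c\<close> neighbours: on the larger side \<open>X\<close> of \<open>S\<close> choose \<open>c\<close> such neighbours of each
  vertex; this prescribes \<open>card X * c\<close> edges, and summing the probability \<open>(e / m\<^sup>2) ^ (card X * c)\<close>
  of containing them over all choices gives at most \<open>8 / m\<close>. Hence there are at least
  \<open>(m\<^sup>2 choose e) / 2 \<ge> 2 ^ (e - 1)\<close> good graphs. A graph on \<open>L \<le> 2 powr (n powr (1/2 - \<delta>))\<close>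
  vertices contains at most \<open>L ^ n\<close> graphs on \<open>[n]\<close>, far fewer than \<open>2 ^ e\<close>, and up to relabelling
  there are at most \<open>2 ^ (L * L)\<close> such graphs; so a counting argument over \<open>(L * L + 1)\<close>-tuples of
  good graphs yields a family that no such graph contains.\<close>

section \<open>Counting subsets\<close>

lemma binomial_le_pow': "n choose k \<le> n ^ k"
  by (cases "k \<le> n") (simp_all add: binomial_le_pow binomial_eq_0)

lemma two_pow_le_binomial:
  assumes "2 * k \<le> n"
  shows "2 ^ k \<le> n choose k"
proof (cases "k = 0")
  case False
  have "(2::real) ^ k \<le> (real n / real k) ^ k"
    using assms False by (intro power_mono) (simp_all add: field_simps)
  also have "\<dots> \<le> real (n choose k)"
    using assms by (intro binomial_ge_n_over_k_pow_k) simp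
  finally have "real (2 ^ k) \<le> real (n choose k)"
    by simp
  then show ?thesis
    by (simp only: of_nat_le_iff)
qed simp

lemma binomial_diff_mult_power_le:
  fixes f e N :: nat
  assumes "f \<le> e" "e \<le> N"
  shows "((N - f) choose (e - f)) * N ^ f \<le> e ^ f * (N choose e)"
  using assms
proof (induction f arbitrary: N e)
  case 0
  then show ?case by simp
next
  case (Suc f)
  obtain N' e' where NE: "N = Suc N'" "e = Suc e'"
    using Suc.prems by (metis Suc_le_D)
  have f: "f \<le> e'" "e' \<le> N'"
    using Suc.prems NE by auto
  show ?case
  proof (cases "N' = 0")
    case True
    then show ?thesis using f NE by simp
  next
    case False
    have IH: "((N' - f) choose (e' - f)) * N' ^ f \<le> e' ^ f * (N' choose e')"
      using Suc.IH f by blast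
    have "e' * N \<le> e * N'"
      using f NE by (simp add: algebra_simps)
    then have ratio: "e' ^ f * N ^ f \<le> e ^ f * N' ^ f"
      using power_mono by (metis power_mult_distrib zero_le)
    have "((N' - f) choose (e' - f)) * N ^ f * N' ^ f \<le> e' ^ f * (N' choose e') * N ^ f"
      using IH by (simp add: algebra_simps)
    also have "\<dots> \<le> e ^ f * (N' choose e') * N' ^ f"
      using mult_right_mono[OF ratio, of "N' choose e'"] by (simp add: algebra_simps)
    finally have "((N' - f) choose (e' - f)) * N ^ f \<le> e ^ f * (N' choose e')"
      using False by simp
    then have "((N' - f) choose (e' - f)) * N ^ f * N \<le> e ^ f * (N * (N' choose e'))"
      by (simp add: algebra_simps)
    also have "N * (N' choose e') = (N choose e) * e"
      using Suc_times_binomial_eq[of N' e'] NE by simp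
    finally show ?thesis
      using NE by (simp add: algebra_simps)
  qed
qed

text \<open>If \<open>E\<close> is a uniformly random \<open>e\<close>-subset of \<open>P\<close>, then \<open>F \<subseteq> E\<close> has
  probability at most \<open>(e / card P) ^ card F\<close>.\<close>

lemma card_supersets_le:
  assumes "finite P" "finite F"
  shows "card {E. E \<subseteq> P \<and> card E = e \<and> F \<subseteq> E} * card P ^ card F
           \<le> e ^ card F * (card P choose e)"
proof (cases "F \<subseteq> P \<and> card F \<le> e \<and> e \<le> card P")
  case False
  have "{E. E \<subseteq> P \<and> card E = e \<and> F \<subseteq> E} = {}"
    using False assms card_mono finite_subset by blast
  then show ?thesis by (metis card.empty mult_0 zero_le)
next
  case True
  let ?A = "{E. E \<subseteq> P \<and> card E = e \<and> F \<subseteq> E}"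
  have "card ?A \<le> card {D. D \<subseteq> P - F \<and> card D = e - card F}"
  proof (rule card_inj_on_le[where f = "\<lambda>E. E - F"])
    show "inj_on (\<lambda>E. E - F) ?A"
      by (auto simp: inj_on_def)
    show "(\<lambda>E. E - F) ` ?A \<subseteq> {D. D \<subseteq> P - F \<and> card D = e - card F}"
      using assms by (auto simp: card_Diff_subset intro: finite_subset)
  qed (use assms in simp)
  also have "\<dots> = (card P - card F) choose (e - card F)"
    using True assms by (simp add: n_subsets card_Diff_subset)
  finally show ?thesis
    using binomial_diff_mult_power_le[of "card F" e "card P"] True
    by (meson le_trans mult_le_mono1)
qed

section \<open>Bipartite graphs on \<open>2 * m\<close> vertices\<close>

lemma bip_edges_eq: "bip_edges (2 * m) = (\<lambda>(u, v). {u, v}) ` ({1..m} \<times> {m + 1..2 * m})"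
  unfolding bip_edges_def by (auto simp: image_iff) (metis (no_types, lifting))

lemma finite_bip_edges: "finite (bip_edges (2 * m))"
  unfolding bip_edges_eq by simp

lemma card_bip_edges: "card (bip_edges (2 * m)) = m * m"
proof -
  have "inj_on (\<lambda>(u, v). {u :: nat, v}) ({1..m} \<times> {m + 1..2 * m})"
    by (auto simp: inj_on_def doubleton_eq_iff)
  then show ?thesis
    unfolding bip_edges_eq by (simp add: card_image)
qed

lemma bip_edges_sides:
  assumes "{u, v} \<in> bip_edges n"
  shows "u \<in> {1..n} \<and> v \<in> {1..n} \<and> (u \<le> n div 2 \<longleftrightarrow> n div 2 < v)"
  using assms unfolding bip_edges_def by (auto simp: doubleton_eq_iff)

lemma simple_graph_bip_edges:
  assumes "E \<subseteq> bip_edges n"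
  shows "simple_graph {1..n} E"
  using assms unfolding simple_graph_def bip_edges_def by fastforce

section \<open>Graphs with a small dense part\<close>

definition dense_configs :: "nat \<Rightarrow> nat \<Rightarrow> nat \<Rightarrow> nat \<Rightarrow> (nat set \<times> nat set \<times> (nat \<Rightarrow> nat set)) set" where
  "dense_configs n c a b = {(X, Y, N). X \<subseteq> {1..n} \<and> card X = a \<and> Y \<subseteq> {1..n} \<and> card Y = b \<and>
     X \<inter> Y = {} \<and> N \<in> X \<rightarrow>\<^sub>E {T. T \<subseteq> Y \<and> card T = c}}"

definition config_edges :: "nat set \<times> nat set \<times> (nat \<Rightarrow> nat set) \<Rightarrow> nat set set" where
  "config_edges K = (case K of (X, Y, N) \<Rightarrow> \<Union>x\<in>X. (\<lambda>y. {x, y}) ` N x)"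

lemma finite_dense_configs: "finite (dense_configs n c a b)"
proof -
  have "dense_configs n c a b \<subseteq> (SIGMA X:Pow {1..n}. Pow {1..n} \<times> (X \<rightarrow>\<^sub>E Pow {1..n}))"
    unfolding dense_configs_def by (auto elim!: PiE_mono[THEN subsetD, rotated])
  then show ?thesis
    by (rule finite_subset) (intro finite_SigmaI finite_cartesian_product finite_PiE; auto intro: finite_subset)
qed

lemma card_dense_configs_le: "card (dense_configs n c a b) \<le> n ^ a * n ^ b * b ^ (a * c)"
proof -
  define subsets where "subsets A k = {X. X \<subseteq> A \<and> card X = k}" for A :: "nat set" and k
  let ?S = "Sigma (subsets {1..n} a) (\<lambda>X. Sigma (subsets {1..n} b) (\<lambda>Y. X \<rightarrow>\<^sub>E subsets Y c))"
  have card_subsets: "card (subsets A k) = card A choose k" if "finite A" for A k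
    using that unfolding subsets_def by (simp add: n_subsets)
  have finite_subsets: "finite (subsets A k)" if "finite A" for A k
    using that unfolding subsets_def by simp
  have "dense_configs n c a b \<subseteq> ?S"
    unfolding dense_configs_def subsets_def by auto
  moreover have "finite ?S"
    by (intro finite_SigmaI finite_PiE finite_subsets) (auto simp: subsets_def intro: finite_subset)
  ultimately have "card (dense_configs n c a b) \<le> card ?S"
    by (simp add: card_mono)
  also have "card ?S = (n choose a) * ((n choose b) * (b choose c) ^ a)"
  proof -
    have "finite (X \<rightarrow>\<^sub>E subsets Y c) \<and> card (X \<rightarrow>\<^sub>E subsets Y c) = (b choose c) ^ a"
      if "X \<in> subsets {1..n} a" "Y \<in> subsets {1..n} b" for X Y
    proof -
      have "finite X" "card X = a" "finite Y" "card Y = b"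
        using that by (auto simp: subsets_def intro: finite_subset)
      then show ?thesis
        by (simp add: card_PiE card_subsets finite_PiE finite_subsets)
    qed
    then have "card ?S = (\<Sum>X\<in>subsets {1..n} a. \<Sum>Y\<in>subsets {1..n} b. (b choose c) ^ a)"
      by (simp add: finite_subsets)
    then show ?thesis
      by (simp add: card_subsets)
  qed
  also have "\<dots> \<le> n ^ a * (n ^ b * (b ^ c) ^ a)"
    by (intro mult_mono power_mono binomial_le_pow') auto
  finally show ?thesis
    by (simp add: ac_simps flip: power_mult)
qed

lemma dense_configsD:
  assumes "(X, Y, N) \<in> dense_configs n c a b"
  shows "finite X" "card X = a" "finite Y" "card Y = b" "X \<inter> Y = {}"
    and "x \<in> X \<Longrightarrow> N x \<subseteq> Y" "x \<in> X \<Longrightarrow> card (N x) = c" "x \<in> X \<Longrightarrow> finite (N x)"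
  using assms unfolding dense_configs_def
  by (auto simp: PiE_iff) (meson finite_atLeastAtMost finite_subset subset_trans)+

lemma finite_config_edges:
  assumes "K \<in> dense_configs n c a b"
  shows "finite (config_edges K)"
  using assms dense_configsD[of _ _ _ n c a b] unfolding config_edges_def by (cases K) auto

lemma card_config_edges:
  assumes "K \<in> dense_configs n c a b"
  shows "card (config_edges K) = a * c"
proof -
  obtain X Y N where K: "K = (X, Y, N)"
    by (cases K)
  note D = dense_configsD[OF assms[unfolded K]]
  have star: "card ((\<lambda>y. {x, y}) ` N x) = c" if "x \<in> X" for x
    using D(7)[OF that] by (subst card_image) (auto simp: inj_on_def doubleton_eq_iff)
  have disjoint: "(\<lambda>y. {x, y}) ` N x \<inter> (\<lambda>y. {x', y}) ` N x' = {}"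
    if "x \<in> X" "x' \<in> X" "x \<noteq> x'" for x x'
    using that D(5) D(6)[OF that(1)] by (auto simp: doubleton_eq_iff)
  have "card (config_edges K) = (\<Sum>x\<in>X. card ((\<lambda>y. {x, y}) ` N x))"
    unfolding K config_edges_def prod.case
    by (rule card_UN_disjoint) (use D(1,8) disjoint in auto)
  then show ?thesis
    using star D(2) by simp
qed

lemma dense_config_of_degrees:
  assumes "X \<subseteq> {1..n}" "Y \<subseteq> {1..n}" "X \<inter> Y = {}"
    and "\<And>x. x \<in> X \<Longrightarrow> c \<le> card {y\<in>Y. {y, x} \<in> E}"
  shows "\<exists>N. (X, Y, N) \<in> dense_configs n c (card X) (card Y) \<and> config_edges (X, Y, N) \<subseteq> E"
proof -
  have "\<forall>x\<in>X. \<exists>T. T \<subseteq> {y\<in>Y. {y, x} \<in> E} \<and> card T = c"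
    using assms(4) by (meson obtain_subset_with_card_n)
  then obtain N where N: "\<forall>x\<in>X. N x \<subseteq> {y\<in>Y. {y, x} \<in> E} \<and> card (N x) = c"
    by metis
  have "(X, Y, restrict N X) \<in> dense_configs n c (card X) (card Y)"
    using assms N unfolding dense_configs_def by auto
  moreover have "config_edges (X, Y, restrict N X) \<subseteq> E"
    using N unfolding config_edges_def by (auto simp: insert_commute)
  ultimately show ?thesis
    by blast
qed

lemma dense_config_of_dense_set:
  assumes "E \<subseteq> bip_edges n" "S \<subseteq> {1..n}" "S \<noteq> {}"
    and "\<forall>v\<in>S. c \<le> card {u\<in>S. {u, v} \<in> E}"
  shows "\<exists>a b K. 1 \<le> a \<and> a \<le> card S \<and> b \<le> a \<and> K \<in> dense_configs n c a b \<and> config_edges K \<subseteq> E"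
proof -
  define lo where "lo = {v\<in>S. v \<le> n div 2}"
  define hi where "hi = {v\<in>S. n div 2 < v}"
  have "finite S"
    using assms(2) finite_subset by blast
  moreover have "S = lo \<union> hi" "lo \<inter> hi = {}"
    by (auto simp: lo_def hi_def)
  ultimately have card_S: "card S = card lo + card hi" and "card S > 0"
    using assms(3) card_Un_disjoint[of lo hi] by (auto simp: card_gt_0_iff)
  have sides: "u \<le> n div 2 \<longleftrightarrow> n div 2 < v" if "{u, v} \<in> E" for u v
    using that assms(1) bip_edges_sides by blast
  have deg_lo: "c \<le> card {u\<in>hi. {u, v} \<in> E}" if "v \<in> lo" for v
  proof -
    have "{u\<in>S. {u, v} \<in> E} = {u\<in>hi. {u, v} \<in> E}"
      using that sides[of _ v] by (auto simp: lo_def hi_def not_le)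
    moreover have "v \<in> S"
      using that by (simp add: lo_def)
    ultimately show ?thesis
      using assms(4) by metis
  qed
  have deg_hi: "c \<le> card {u\<in>lo. {u, v} \<in> E}" if "v \<in> hi" for v
  proof -
    have "{u\<in>S. {u, v} \<in> E} = {u\<in>lo. {u, v} \<in> E}"
      using that sides[of _ v] by (auto simp: lo_def hi_def not_le)
    moreover have "v \<in> S"
      using that by (simp add: hi_def)
    ultimately show ?thesis
      using assms(4) by metis
  qed
  have sub: "lo \<subseteq> {1..n}" "hi \<subseteq> {1..n}" "lo \<inter> hi = {}"
    using assms(2) by (auto simp: lo_def hi_def)
  show ?thesis
  proof (cases "card hi \<le> card lo")
    case True
    obtain N where "(lo, hi, N) \<in> dense_configs n c (card lo) (card hi)" "config_edges (lo, hi, N) \<subseteq> E"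
      using dense_config_of_degrees[OF sub deg_lo] by blast
    moreover have "1 \<le> card lo" "card lo \<le> card S"
      using True card_S \<open>card S > 0\<close> by linarith+
    ultimately show ?thesis
      using True by blast
  next
    case False
    obtain N where "(hi, lo, N) \<in> dense_configs n c (card hi) (card lo)" "config_edges (hi, lo, N) \<subseteq> E"
      using dense_config_of_degrees[OF sub(2,1) _ deg_hi] sub(3) by (metis Int_commute)
    moreover have "1 \<le> card hi" "card hi \<le> card S" "card lo \<le> card hi"
      using False card_S by linarith+
    ultimately show ?thesis
      by blast
  qed
qed

definition bip_graphs_with :: "nat \<Rightarrow> nat \<Rightarrow> nat set set \<Rightarrow> nat set set set" where
  "bip_graphs_with m e F = {E. E \<subseteq> bip_edges (2 * m) \<and> card E = e \<and> F \<subseteq> E}"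

lemma finite_bip_graphs_with: "finite (bip_graphs_with m e F)"
  unfolding bip_graphs_with_def
  by (rule finite_subset[of _ "Pow (bip_edges (2 * m))"]) (auto simp: finite_bip_edges)

lemma card_bip_graphs_with_le:
  assumes "finite F" and "m > 0"
  shows "real (card (bip_graphs_with m e F)) \<le> (real e / real (m * m)) ^ card F * real (m * m choose e)"
proof -
  have "card (bip_graphs_with m e F) * (m * m) ^ card F \<le> e ^ card F * (m * m choose e)"
    using card_supersets_le[OF finite_bip_edges assms(1), of m e]
    unfolding bip_graphs_with_def card_bip_edges .
  then have "real (card (bip_graphs_with m e F)) * real (m * m) ^ card F
               \<le> real e ^ card F * real (m * m choose e)"
    unfolding of_nat_mult[symmetric] of_nat_power[symmetric] of_nat_le_iff .
  moreover have "real (m * m) ^ card F > 0"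
    using assms(2) by simp
  ultimately show ?thesis
    unfolding power_divide by (simp add: pos_le_divide_eq mult.commute mult.left_commute)
qed

definition small_dense_graphs :: "nat \<Rightarrow> nat \<Rightarrow> nat \<Rightarrow> nat \<Rightarrow> nat set set set" where
  "small_dense_graphs m e c s = {E. E \<subseteq> bip_edges (2 * m) \<and> card E = e \<and>
     (\<exists>S\<subseteq>{1..2 * m}. S \<noteq> {} \<and> card S \<le> s \<and> (\<forall>v\<in>S. c \<le> card {u\<in>S. {u, v} \<in> E}))}"

lemma card_small_dense_graphs_le_sum:
  "card (small_dense_graphs m e c s)
     \<le> (\<Sum>a\<in>{1..s}. \<Sum>b\<in>{0..a}. \<Sum>K\<in>dense_configs (2 * m) c a b.
          card (bip_graphs_with m e (config_edges K)))"
proof -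
  let ?U = "\<Union>a\<in>{1..s}. \<Union>b\<in>{0..a}. \<Union>K\<in>dense_configs (2 * m) c a b. bip_graphs_with m e (config_edges K)"
  have "small_dense_graphs m e c s \<subseteq> ?U"
  proof
    fix E assume "E \<in> small_dense_graphs m e c s"
    then obtain S where E: "E \<subseteq> bip_edges (2 * m)" "card E = e" "S \<subseteq> {1..2 * m}" "S \<noteq> {}"
      "card S \<le> s" "\<forall>v\<in>S. c \<le> card {u\<in>S. {u, v} \<in> E}"
      unfolding small_dense_graphs_def by blast
    then obtain a b K where "1 \<le> a" "a \<le> card S" "b \<le> a" "K \<in> dense_configs (2 * m) c a b"
      "config_edges K \<subseteq> E"
      using dense_config_of_dense_set by meson
    moreover have "a \<in> {1..s}" "b \<in> {0..a}"
      using calculation E(5) by auto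
    moreover have "E \<in> bip_graphs_with m e (config_edges K)"
      using calculation E(1,2) unfolding bip_graphs_with_def by blast
    ultimately show "E \<in> ?U"
      by blast
  qed
  then have "card (small_dense_graphs m e c s) \<le> card ?U"
    by (rule card_mono[rotated]) (simp add: finite_dense_configs finite_bip_graphs_with)
  also have "\<dots> \<le> (\<Sum>a\<in>{1..s}. \<Sum>b\<in>{0..a}. \<Sum>K\<in>dense_configs (2 * m) c a b.
                    card (bip_graphs_with m e (config_edges K)))"
    by (intro card_UN_le[THEN order_trans] sum_mono card_UN_le) (simp_all add: finite_dense_configs)
  finally show ?thesis .
qed

lemma dense_configs_weight_le:
  fixes m e c s a b :: nat
  assumes m: "m \<ge> 2" and sparse: "(real s * real e / real (m * m)) ^ c \<le> 1 / real m ^ 4"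
    and a: "1 \<le> a" "a \<le> s" and b: "b \<le> a"
  shows "real (card (dense_configs (2 * m) c a b)) * (real e / real (m * m)) ^ (a * c) \<le> 4 / real m ^ 2"
proof -
  have "(2 * m) ^ b \<le> (2 * m) ^ a" "b ^ (a * c) \<le> s ^ (a * c)"
    using a b m by (intro power_increasing power_mono; simp)+
  then have "card (dense_configs (2 * m) c a b) \<le> (2 * m) ^ a * (2 * m) ^ a * s ^ (a * c)"
    using card_dense_configs_le[of "2 * m" c a b] by (meson le_trans mult_le_mono order_refl)
  also have "(2 * m) ^ a * (2 * m) ^ a = (4 * m\<^sup>2) ^ a"
  proof -
    have "(2 * m) * (2 * m) = 4 * m\<^sup>2"
      by (simp add: power2_eq_square)
    then show ?thesis
      by (metis power_mult_distrib)
  qed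
  finally have "real (card (dense_configs (2 * m) c a b)) \<le> real ((4 * m\<^sup>2) ^ a * s ^ (a * c))"
    by (simp only: of_nat_le_iff)
  then have card_le: "real (card (dense_configs (2 * m) c a b)) \<le> (4 * real m ^ 2) ^ a * real s ^ (a * c)"
    by simp
  have weight: "real s ^ (a * c) * (real e / real (m * m)) ^ (a * c) = ((real s * real e / real (m * m)) ^ c) ^ a"
    by (simp only: power_mult_distrib[symmetric] times_divide_eq_right mult.commute[of a c] power_mult)
  have "real (card (dense_configs (2 * m) c a b)) * (real e / real (m * m)) ^ (a * c)
      \<le> (4 * real m ^ 2) ^ a * (real s ^ (a * c) * (real e / real (m * m)) ^ (a * c))"
    using mult_right_mono[OF card_le, of "(real e / real (m * m)) ^ (a * c)"] by (simp add: mult.assoc)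
  also have "\<dots> \<le> (4 * real m ^ 2) ^ a * (1 / real m ^ 4) ^ a"
    unfolding weight by (intro mult_left_mono power_mono sparse) auto
  also have "\<dots> = (4 / real m ^ 2) ^ a"
  proof -
    have "4 * real m ^ 2 * (1 / real m ^ 4) = 4 / real m ^ 2"
      using m by (simp add: field_simps power2_eq_square power4_eq_xxxx)
    then show ?thesis
      by (simp only: power_mult_distrib[symmetric])
  qed
  also have "\<dots> \<le> 4 / real m ^ 2"
  proof -
    have "4 \<le> real m ^ 2"
      using m power_mono[of 2 "real m" 2] by simp
    then have "4 / real m ^ 2 \<le> 1"
      by (auto simp: divide_le_eq_1)
    then show ?thesis
      using power_decreasing[of 1 a "4 / real m ^ 2"] a by simp
  qed
  finally show ?thesis .
qed

lemma sum_card_bip_graphs_with_configs_le: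
  fixes m e c s a b :: nat
  assumes m: "m \<ge> 2" and sparse: "(real s * real e / real (m * m)) ^ c \<le> 1 / real m ^ 4"
    and a: "1 \<le> a" "a \<le> s" and b: "b \<le> a"
  shows "(\<Sum>K\<in>dense_configs (2 * m) c a b. real (card (bip_graphs_with m e (config_edges K))))
           \<le> 4 / real m ^ 2 * real (m * m choose e)"
proof -
  have "(\<Sum>K\<in>dense_configs (2 * m) c a b. real (card (bip_graphs_with m e (config_edges K))))
        \<le> (\<Sum>K\<in>dense_configs (2 * m) c a b. (real e / real (m * m)) ^ (a * c) * real (m * m choose e))"
    using m card_bip_graphs_with_le[OF finite_config_edges] card_config_edges by (intro sum_mono) fastforce
  also have "\<dots> = real (card (dense_configs (2 * m) c a b)) * (real e / real (m * m)) ^ (a * c)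
                    * real (m * m choose e)"
    by simp
  also have "\<dots> \<le> 4 / real m ^ 2 * real (m * m choose e)"
    using a b by (intro mult_right_mono dense_configs_weight_le[OF m sparse]) auto
  finally show ?thesis .
qed

lemma card_small_dense_graphs_le:
  fixes m e c s :: nat
  assumes m: "m \<ge> 16" and sparse: "(real s * real e / real (m * m)) ^ c \<le> 1 / real m ^ 4"
    and s: "s * s \<le> m"
  shows "real (card (small_dense_graphs m e c s)) \<le> real (m * m choose e) / 2"
proof -
  define C where "C = real (m * m choose e)"
  have C: "C \<ge> 0"
    unfolding C_def by simp
  have "real (card (small_dense_graphs m e c s))
      \<le> (\<Sum>a\<in>{1..s}. \<Sum>b\<in>{0..a}. \<Sum>K\<in>dense_configs (2 * m) c a b.
           real (card (bip_graphs_with m e (config_edges K))))"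
    using card_small_dense_graphs_le_sum[of m e c s] by (simp only: of_nat_sum[symmetric] of_nat_le_iff)
  also have "\<dots> \<le> (\<Sum>a\<in>{1..s}. \<Sum>b\<in>{0..a}. 4 / real m ^ 2 * C)"
    unfolding C_def using m by (intro sum_mono sum_card_bip_graphs_with_configs_le[OF _ sparse]) auto
  also have "\<dots> = (\<Sum>a\<in>{1..s}. real (a + 1) * (4 / real m ^ 2 * C))"
    by simp
  also have "\<dots> \<le> (\<Sum>a\<in>{1..s}. real (s + 1) * (4 / real m ^ 2 * C))"
    by (intro sum_mono mult_right_mono) (use C in auto)
  also have "\<dots> = real (s * (s + 1)) * (4 / real m ^ 2 * C)"
    by (simp add: algebra_simps)
  also have "\<dots> \<le> real (2 * m) * (4 / real m ^ 2 * C)"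
  proof -
    have "s \<le> m"
      using s le_square order_trans by blast
    then have "s * (s + 1) \<le> 2 * m"
      using s by simp
    then have "real (s * (s + 1)) \<le> real (2 * m)"
      by (simp only: of_nat_le_iff)
    then show ?thesis
      using C by (intro mult_right_mono) simp_all
  qed
  also have "\<dots> = 8 / real m * C"
    using m by (simp add: power2_eq_square field_simps)
  also have "\<dots> \<le> C / 2"
    using m C by (simp add: field_simps mult_left_mono)
  finally show ?thesis
    unfolding C_def .
qed

lemma good_graph_if_not_small_dense:
  fixes m :: nat and eps c :: real
  defines "e \<equiv> nat \<lfloor>real m powr (2 - eps)\<rfloor>"
  assumes "E \<subseteq> bip_edges (2 * m)" "card E = e"
    and "E \<notin> small_dense_graphs m e (nat \<lceil>c\<rceil>) (nat \<lfloor>real m powr (1/2)\<rfloor>)"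
  shows "good_graph eps (1/2) c (2 * m) E"
proof -
  have "\<exists>v\<in>S. real (card {u\<in>S. {u, v} \<in> E}) < c"
    if S: "S \<subseteq> {1..2 * m}" "S \<noteq> {}" "real (card S) \<le> real m powr (1/2)" for S
  proof -
    have "card S \<le> nat \<lfloor>real m powr (1/2)\<rfloor>"
      using S(3) by (simp add: le_nat_floor)
    then obtain v where "v \<in> S" "\<not> nat \<lceil>c\<rceil> \<le> card {u\<in>S. {u, v} \<in> E}"
      using assms S unfolding small_dense_graphs_def by blast
    moreover from this have "int (card {u\<in>S. {u, v} \<in> E}) < \<lceil>c\<rceil>"
      by linarith
    ultimately show ?thesis
      by (auto simp: less_ceiling_iff not_le)
  qed
  moreover have "int (card E) = \<lfloor>real m powr (2 - eps)\<rfloor>"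
    using assms(2,3) unfolding e_def by simp
  ultimately show ?thesis
    using assms(2) unfolding good_graph_def by simp
qed

lemma finite_good_graphs: "finite (good_graphs eps eps' c (2 * m))"
  by (rule finite_subset[of _ "Pow (bip_edges (2 * m))"])
    (auto simp: good_graphs_def good_graph_def finite_bip_edges)

lemma card_good_graphs_ge:
  fixes m :: nat and eps c :: real
  defines "e \<equiv> nat \<lfloor>real m powr (2 - eps)\<rfloor>" and "s \<equiv> nat \<lfloor>real m powr (1/2)\<rfloor>"
  assumes m: "m \<ge> 16" and sparse: "(real s * real e / real (m * m)) ^ nat \<lceil>c\<rceil> \<le> 1 / real m ^ 4"
  shows "real (m * m choose e) / 2 \<le> real (card (good_graphs eps (1/2) c (2 * m)))"
proof -
  define W where "W = {E. E \<subseteq> bip_edges (2 * m) \<and> card E = e}"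
  define B where "B = small_dense_graphs m e (nat \<lceil>c\<rceil>) s"
  have "s * s \<le> m"
  proof -
    have "real s * real s \<le> real m powr (1/2) * real m powr (1/2)"
      unfolding s_def by (intro mult_mono) auto
    also have "\<dots> = real m"
      by (simp flip: powr_add)
    finally show ?thesis
      by (simp only: of_nat_mult[symmetric] of_nat_le_iff)
  qed
  then have "real (card B) \<le> real (m * m choose e) / 2"
    unfolding B_def by (rule card_small_dense_graphs_le[OF m sparse])
  moreover have "card W = m * m choose e"
    unfolding W_def by (simp add: n_subsets finite_bip_edges card_bip_edges)
  moreover have "finite B"
    by (rule finite_subset[of _ "Pow (bip_edges (2 * m))"])
      (auto simp: B_def small_dense_graphs_def finite_bip_edges)
  then have "card W - card B \<le> card (W - B)"
    by (rule diff_card_le_card_Diff)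
  moreover have "W - B \<subseteq> good_graphs eps (1/2) c (2 * m)"
    using good_graph_if_not_small_dense unfolding W_def B_def e_def s_def good_graphs_def by blast
  then have "card (W - B) \<le> card (good_graphs eps (1/2) c (2 * m))"
    by (rule card_mono[OF finite_good_graphs])
  ultimately show ?thesis
    by linarith
qed

section \<open>Families without a small universal graph\<close>

definition pullback :: "nat \<Rightarrow> nat set set \<Rightarrow> (nat \<Rightarrow> nat) \<Rightarrow> nat set set" where
  "pullback n EU \<pi> = {{x, y} | x y. x \<in> {1..n} \<and> y \<in> {1..n} \<and> x \<noteq> y \<and> {\<pi> x, \<pi> y} \<in> EU}"

lemma induced_sub_eq_pullback:
  assumes "simple_graph {1..n} E" "induced_sub n E V EU"
  shows "\<exists>\<pi>\<in>{1..n} \<rightarrow>\<^sub>E V. E = pullback n EU \<pi>"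
proof -
  obtain \<pi> where \<pi>: "\<pi> ` {1..n} \<subseteq> V"
    "\<forall>x\<in>{1..n}. \<forall>y\<in>{1..n}. x \<noteq> y \<longrightarrow> ({x, y} \<in> E \<longleftrightarrow> {\<pi> x, \<pi> y} \<in> EU)"
    using assms(2) unfolding induced_sub_def by blast
  have "E = pullback n EU (restrict \<pi> {1..n})"
  proof (intro subset_antisym subsetI)
    fix e assume "e \<in> E"
    moreover obtain x y where "e = {x, y}" "x \<in> {1..n}" "y \<in> {1..n}" "x \<noteq> y"
      using assms(1) \<open>e \<in> E\<close> unfolding simple_graph_def by blast
    ultimately show "e \<in> pullback n EU (restrict \<pi> {1..n})"
      using \<pi>(2) unfolding pullback_def by auto
  next
    fix e assume "e \<in> pullback n EU (restrict \<pi> {1..n})"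
    then obtain x y where "e = {x, y}" "x \<in> {1..n}" "y \<in> {1..n}" "x \<noteq> y" "{\<pi> x, \<pi> y} \<in> EU"
      unfolding pullback_def by auto
    then show "e \<in> E"
      using \<pi>(2) by blast
  qed
  moreover have "restrict \<pi> {1..n} \<in> {1..n} \<rightarrow>\<^sub>E V"
    using \<pi>(1) by auto
  ultimately show ?thesis
    by blast
qed

lemma card_induced_subgraphs_le:
  assumes "finite V" and "\<And>E. E \<in> G \<Longrightarrow> simple_graph {1..n} E"
  shows "card {E\<in>G. induced_sub n E V EU} \<le> card V ^ n"
proof -
  have "{E\<in>G. induced_sub n E V EU} \<subseteq> pullback n EU ` ({1..n} \<rightarrow>\<^sub>E V)"
    using induced_sub_eq_pullback assms(2) by blast
  then have "card {E\<in>G. induced_sub n E V EU} \<le> card (pullback n EU ` ({1..n} \<rightarrow>\<^sub>E V))"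
    by (rule card_mono[rotated]) (simp add: assms(1) finite_PiE)
  also have "\<dots> \<le> card ({1..n} \<rightarrow>\<^sub>E V)"
    by (rule card_image_le) (simp add: assms(1) finite_PiE)
  finally show ?thesis
    by (simp add: card_PiE)
qed

lemma induced_sub_relabel:
  assumes "simple_graph V EU" "inj_on \<sigma> V" "induced_sub n E V EU"
  shows "induced_sub n E (\<sigma> ` V) (image \<sigma> ` EU)"
proof -
  obtain \<pi> where \<pi>: "inj_on \<pi> {1..n}" "\<pi> ` {1..n} \<subseteq> V"
    "\<forall>x\<in>{1..n}. \<forall>y\<in>{1..n}. x \<noteq> y \<longrightarrow> ({x, y} \<in> E \<longleftrightarrow> {\<pi> x, \<pi> y} \<in> EU)"
    using assms(3) unfolding induced_sub_def by blast
  have EU: "\<And>f. f \<in> EU \<Longrightarrow> f \<subseteq> V"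
    using assms(1) unfolding simple_graph_def by blast
  have "{\<pi> x, \<pi> y} \<in> EU \<longleftrightarrow> \<sigma> ` {\<pi> x, \<pi> y} \<in> image \<sigma> ` EU" if "x \<in> {1..n}" "y \<in> {1..n}" for x y
  proof
    assume "\<sigma> ` {\<pi> x, \<pi> y} \<in> image \<sigma> ` EU"
    then obtain f where "f \<in> EU" "\<sigma> ` f = \<sigma> ` {\<pi> x, \<pi> y}"
      by blast
    moreover have "{\<pi> x, \<pi> y} \<subseteq> V"
      using that \<pi>(2) by auto
    ultimately show "{\<pi> x, \<pi> y} \<in> EU"
      using EU inj_on_image_eq_iff[OF assms(2)] by metis
  qed blast
  then have "inj_on (\<sigma> \<circ> \<pi>) {1..n} \<and> (\<sigma> \<circ> \<pi>) ` {1..n} \<subseteq> \<sigma> ` V \<and>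
      (\<forall>x\<in>{1..n}. \<forall>y\<in>{1..n}. x \<noteq> y \<longrightarrow> ({x, y} \<in> E \<longleftrightarrow> {(\<sigma> \<circ> \<pi>) x, (\<sigma> \<circ> \<pi>) y} \<in> image \<sigma> ` EU))"
    using \<pi> assms(2) by (auto simp: comp_inj_on inj_on_subset)
  then show ?thesis
    unfolding induced_sub_def by blast
qed

lemma induced_sub_mono:
  assumes "induced_sub n E V EU" "V \<subseteq> V'"
  shows "induced_sub n E V' EU"
  using assms unfolding induced_sub_def by (meson subset_trans)

lemma simple_graph_host_normal_form:
  assumes "simple_graph V EU" "card V \<le> L"
  shows "\<exists>EU' \<subseteq> {e. e \<subseteq> {..<L} \<and> card e = 2}.
           \<forall>n E. induced_sub n E V EU \<longrightarrow> induced_sub n E {..<L} EU'"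
proof -
  obtain \<sigma> where \<sigma>: "bij_betw \<sigma> V {0..<card V}"
    using assms(1) ex_bij_betw_finite_nat unfolding simple_graph_def by blast
  then have "inj_on \<sigma> V" and \<sigma>V: "\<sigma> ` V \<subseteq> {..<L}"
    using assms(2) by (auto simp: bij_betw_def)
  have "image \<sigma> ` EU \<subseteq> {e. e \<subseteq> {..<L} \<and> card e = 2}"
  proof
    fix e' assume "e' \<in> image \<sigma> ` EU"
    then obtain x y where "e' = {\<sigma> x, \<sigma> y}" "x \<in> V" "y \<in> V" "x \<noteq> y"
      using assms(1) unfolding simple_graph_def by blast
    moreover from this have "\<sigma> x \<noteq> \<sigma> y"
      using \<open>inj_on \<sigma> V\<close> by (meson inj_onD)
    ultimately show "e' \<in> {e. e \<subseteq> {..<L} \<and> card e = 2}"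
      using \<sigma>V by auto
  qed
  moreover have "induced_sub n E {..<L} (image \<sigma> ` EU)" if "induced_sub n E V EU" for n E
    using induced_sub_relabel[OF assms(1) \<open>inj_on \<sigma> V\<close> that] \<sigma>V by (rule induced_sub_mono)
  ultimately show ?thesis
    by blast
qed

lemma card_tuples_in_small_hosts_le:
  assumes "\<And>E. E \<in> G \<Longrightarrow> simple_graph {1..n} E"
  shows "card (\<Union>EU\<in>Pow {e. e \<subseteq> {..<L} \<and> card e = 2}. {..<K} \<rightarrow>\<^sub>E {E\<in>G. induced_sub n E {..<L} EU})
           \<le> 2 ^ (L * L) * (L ^ n) ^ K"
proof -
  define P where "P = {e. e \<subseteq> {..<L} \<and> card e = 2}"
  have card_P: "card P \<le> L * L" and "finite P"
    unfolding P_def using binomial_le_pow'[of L 2] by (simp_all add: n_subsets power2_eq_square)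
  have "card (\<Union>EU\<in>Pow P. {..<K} \<rightarrow>\<^sub>E {E\<in>G. induced_sub n E {..<L} EU})
          \<le> (\<Sum>EU\<in>Pow P. card ({..<K} \<rightarrow>\<^sub>E {E\<in>G. induced_sub n E {..<L} EU}))"
    using \<open>finite P\<close> by (intro card_UN_le) simp
  also have "\<dots> \<le> (\<Sum>EU\<in>Pow P. (L ^ n) ^ K)"
    using card_induced_subgraphs_le[of "{..<L}" G n] assms
    by (intro sum_mono) (simp add: card_PiE power_mono)
  also have "\<dots> = 2 ^ card P * (L ^ n) ^ K"
    using \<open>finite P\<close> by (simp add: card_Pow)
  also have "\<dots> \<le> 2 ^ (L * L) * (L ^ n) ^ K"
    using card_P by (intro mult_right_mono power_increasing) auto
  finally show ?thesis
    unfolding P_def .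
qed

lemma exists_family_without_small_universal_graph:
  assumes "finite G" "\<And>E. E \<in> G \<Longrightarrow> simple_graph {1..n} E" "L \<ge> 1" "2 * L ^ n \<le> card G"
  shows "\<exists>M\<subseteq>G. card M \<le> L * L + 1 \<and>
           \<not> (\<exists>V EU. simple_graph V EU \<and> card V \<le> L \<and> (\<forall>E\<in>M. induced_sub n E V EU))"
proof -
  define K where "K = L * L + 1"
  define P where "P = {e. e \<subseteq> {..<L} \<and> card e = 2}"
  define I where "I EU = {E\<in>G. induced_sub n E {..<L} EU}" for EU
  define covered where "covered = (\<Union>EU\<in>Pow P. {..<K} \<rightarrow>\<^sub>E I EU)"
  have "finite covered"
    unfolding covered_def I_def P_def using assms(1) by (auto intro!: finite_PiE)
  have "card covered \<le> 2 ^ (L * L) * (L ^ n) ^ K"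
    using card_tuples_in_small_hosts_le[OF assms(2)] unfolding covered_def I_def P_def .
  also have "\<dots> < 2 ^ K * (L ^ n) ^ K"
    using assms(3) unfolding K_def by (intro mult_strict_right_mono power_strict_increasing) auto
  also have "\<dots> = (2 * L ^ n) ^ K"
    by (simp add: power_mult_distrib)
  also have "\<dots> \<le> card G ^ K"
    using assms(4) by (rule power_mono) simp
  also have "\<dots> = card ({..<K} \<rightarrow>\<^sub>E G)"
    by (simp add: card_PiE)
  finally have "\<not> {..<K} \<rightarrow>\<^sub>E G \<subseteq> covered"
    using card_mono[OF \<open>finite covered\<close>] not_le by blast
  then obtain t where t: "t \<in> {..<K} \<rightarrow>\<^sub>E G" "t \<notin> covered"
    by blast
  have "\<not> (\<exists>V EU. simple_graph V EU \<and> card V \<le> L \<and> (\<forall>E\<in>t ` {..<K}. induced_sub n E V EU))"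
  proof
    assume "\<exists>V EU. simple_graph V EU \<and> card V \<le> L \<and> (\<forall>E\<in>t ` {..<K}. induced_sub n E V EU)"
    then obtain V EU where "simple_graph V EU" "card V \<le> L" "\<forall>E\<in>t ` {..<K}. induced_sub n E V EU"
      by blast
    moreover obtain EU' where "EU' \<subseteq> P" "\<forall>n E. induced_sub n E V EU \<longrightarrow> induced_sub n E {..<L} EU'"
      using simple_graph_host_normal_form[OF calculation(1,2)] unfolding P_def by blast
    ultimately have "t \<in> {..<K} \<rightarrow>\<^sub>E I EU'"
      using t(1) unfolding I_def by (auto simp: PiE_iff)
    then show False
      using t(2) \<open>EU' \<subseteq> P\<close> unfolding covered_def by blast
  qed
  moreover have "t ` {..<K} \<subseteq> G" "card (t ` {..<K}) \<le> K"
    using t(1) card_image_le[of "{..<K}" t] by auto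
  ultimately show ?thesis
    unfolding K_def by blast
qed

section \<open>Asymptotics\<close>

lemma edge_density_power_le:
  fixes \<delta> :: real and m :: nat
  assumes "0 < \<delta>" and "m \<ge> 1"
  shows "(real (nat \<lfloor>real m powr (1/2)\<rfloor>) * real (nat \<lfloor>real m powr (2 - (1/2 + \<delta>/2))\<rfloor>) / real (m * m))
           ^ nat \<lceil>8 / \<delta>\<rceil> \<le> 1 / real m ^ 4"
proof -
  define x where "x = real m"
  define q where "q = real (nat \<lfloor>real m powr (1/2)\<rfloor>) * real (nat \<lfloor>real m powr (2 - (1/2 + \<delta>/2))\<rfloor>) / real (m * m)"
  have x: "x \<ge> 1"
    using assms(2) unfolding x_def by simp
  have m2: "real (m * m) = x powr 2"
    using x by (simp add: x_def powr_realpow power2_eq_square)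
  have "q \<le> x powr (1/2) * x powr (2 - (1/2 + \<delta>/2)) / x powr 2"
    unfolding q_def m2 unfolding x_def by (intro divide_right_mono mult_mono) auto
  also have "\<dots> = x powr (- \<delta> / 2)"
    by (simp flip: powr_add powr_diff)
  finally have q: "q \<le> x powr (- \<delta> / 2)" .
  have c: "8 / \<delta> \<le> real (nat \<lceil>8 / \<delta>\<rceil>)"
    by linarith
  have "8 \<le> real (nat \<lceil>8 / \<delta>\<rceil>) * \<delta>"
    using mult_right_mono[OF c, of \<delta>] assms(1) by simp
  then have exponent: "real (nat \<lceil>8 / \<delta>\<rceil>) * (- \<delta> / 2) \<le> -4"
    by simp
  have "q ^ nat \<lceil>8 / \<delta>\<rceil> \<le> (x powr (- \<delta> / 2)) ^ nat \<lceil>8 / \<delta>\<rceil>"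
    using q by (intro power_mono) (simp_all add: q_def)
  also have "\<dots> = x powr (real (nat \<lceil>8 / \<delta>\<rceil>) * (- \<delta> / 2))"
    using x by (simp add: powr_power)
  also have "\<dots> \<le> x powr (-4)"
    using x exponent by (intro powr_mono) auto
  also have "\<dots> = 1 / x ^ 4"
    using x by (simp add: powr_minus_divide powr_realpow)
  finally show ?thesis
    unfolding q_def x_def .
qed

lemma eventually_powr_sum_le_sqrt:
  fixes \<delta> :: real
  assumes "0 < \<delta>"
  shows "eventually (\<lambda>n::nat. 2 * real n powr (1/2 - \<delta>) + 1 \<le> sqrt (real n)) at_top"
proof (cases "\<delta> < 1/2")
  case True
  then show ?thesis
    using assms by real_asymp
next
  case False
  have "eventually (\<lambda>n::nat. 3 \<le> sqrt (real n)) at_top"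
    by real_asymp
  moreover have "eventually (\<lambda>n::nat. 1 \<le> n) at_top"
    by (rule eventually_ge_at_top)
  ultimately show ?thesis
  proof eventually_elim
    case (elim n)
    have "real n powr (1/2 - \<delta>) \<le> real n powr 0"
      using elim False by (intro powr_mono) auto
    then show ?case
      using elim by simp
  qed
qed

lemma two_pow_le_card_good_graphs:
  fixes \<delta> :: real and m :: nat
  defines "e \<equiv> nat \<lfloor>real m powr (2 - (1/2 + \<delta>/2))\<rfloor>"
  assumes \<delta>: "0 < \<delta>" and m: "m \<ge> 16" and e: "2 * e \<le> m * m"
  shows "2 ^ e \<le> 2 * real (card (good_graphs (1/2 + \<delta>/2) (1/2) (8/\<delta>) (2 * m)))"
proof -
  have "real (2 ^ e) \<le> real (m * m choose e)"
    using two_pow_le_binomial[OF e] by (simp only: of_nat_le_iff)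
  also have "\<dots> \<le> 2 * real (card (good_graphs (1/2 + \<delta>/2) (1/2) (8/\<delta>) (2 * m)))"
    using card_good_graphs_ge[OF m edge_density_power_le[OF \<delta>]] m unfolding e_def by simp
  finally show ?thesis
    by simp
qed

lemma nat_floor_two_powr_bounds:
  fixes t :: real
  assumes "0 \<le> t"
  shows "1 \<le> nat \<lfloor>2 powr t\<rfloor>" "real (nat \<lfloor>2 powr t\<rfloor>) ^ n \<le> 2 powr (t * real n)"
    and "real (nat \<lfloor>2 powr t\<rfloor>) ^ 2 + 1 \<le> 2 powr (2 * t + 1)"
proof -
  have one: "1 \<le> 2 powr t"
    using assms by (simp add: ge_one_powr_ge_zero)
  then show "1 \<le> nat \<lfloor>2 powr t\<rfloor>"
    by (simp add: le_nat_floor)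
  have L: "real (nat \<lfloor>2 powr t\<rfloor>) \<le> 2 powr t"
    using one by simp
  then show "real (nat \<lfloor>2 powr t\<rfloor>) ^ n \<le> 2 powr (t * real n)"
    using power_mono[OF L, of n] by (simp add: powr_power mult.commute)
  have "real (nat \<lfloor>2 powr t\<rfloor>) ^ 2 + 1 \<le> (2 powr t) ^ 2 + (2 powr t) ^ 2"
    using power_mono[OF L, of 2] one by (intro add_mono) (auto simp: one_le_power)
  also have "\<dots> = 2 powr (2 * t) * 2 powr 1"
    by (simp add: powr_power)
  also have "\<dots> = 2 powr (2 * t + 1)"
    by (rule powr_add[symmetric])
  finally show "real (nat \<lfloor>2 powr t\<rfloor>) ^ 2 + 1 \<le> 2 powr (2 * t + 1)" .
qed

lemma host_power_le_card_good_graphs: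
  fixes \<delta> :: real and m :: nat
  defines "t \<equiv> real (2 * m) powr (1/2 - \<delta>)"
  assumes \<delta>: "0 < \<delta>" and m: "m \<ge> 16"
    and e_large: "real (2 * m) powr (3/2 - \<delta>) + 3 \<le> real m powr (2 - (1/2 + \<delta>/2))"
    and e_small: "2 * real m powr (2 - (1/2 + \<delta>/2)) \<le> real m * real m"
  shows "2 * nat \<lfloor>2 powr t\<rfloor> ^ (2 * m) \<le> card (good_graphs (1/2 + \<delta>/2) (1/2) (8/\<delta>) (2 * m))"
proof -
  define e where "e = nat \<lfloor>real m powr (2 - (1/2 + \<delta>/2))\<rfloor>"
  have "t * real (2 * m) = real (2 * m) powr (1 + (1/2 - \<delta>))"
    unfolding t_def by (metis mult.commute of_nat_0_le_iff powr_mult_base)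
  then have "t * real (2 * m) \<le> real e - 2"
    using e_large unfolding e_def by (simp add: algebra_simps) linarith
  then have "2 powr (t * real (2 * m)) \<le> 2 powr (real e - 2)"
    by (rule powr_mono) simp
  moreover have "t \<ge> 0"
    unfolding t_def by simp
  ultimately have "real (nat \<lfloor>2 powr t\<rfloor>) ^ (2 * m) \<le> 2 powr (real e - 2)"
    using nat_floor_two_powr_bounds(2)[of t "2 * m"] by linarith
  also have "\<dots> = 2 ^ e / 4"
    by (simp add: powr_diff powr_realpow)
  also have "\<dots> \<le> real (card (good_graphs (1/2 + \<delta>/2) (1/2) (8/\<delta>) (2 * m))) / 2"
  proof -
    have "real (2 * e) \<le> real (m * m)"
      using e_small unfolding e_def by simp linarith
    then show ?thesis
      using two_pow_le_card_good_graphs[OF \<delta> m] unfolding e_def of_nat_le_iff by simp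
  qed
  finally have "real (2 * nat \<lfloor>2 powr t\<rfloor> ^ (2 * m))
                  \<le> real (card (good_graphs (1/2 + \<delta>/2) (1/2) (8/\<delta>) (2 * m)))"
    by simp
  then show ?thesis
    by (simp only: of_nat_le_iff)
qed

lemma good_graphs_without_small_universal_graph:
  fixes \<delta> :: real and m :: nat
  defines "t \<equiv> real (2 * m) powr (1/2 - \<delta>)"
  assumes \<delta>: "0 < \<delta>" and m: "m \<ge> 16"
    and e_large: "real (2 * m) powr (3/2 - \<delta>) + 3 \<le> real m powr (2 - (1/2 + \<delta>/2))"
    and e_small: "2 * real m powr (2 - (1/2 + \<delta>/2)) \<le> real m * real m"
    and t_small: "2 * t + 1 \<le> sqrt (real (2 * m))"
  shows "\<exists>M. M \<subseteq> good_graphs (1/2 + \<delta>/2) (1/2) (8/\<delta>) (2 * m) \<and>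
           real (card M) \<le> real_of_int \<lceil>2 powr sqrt (real (2 * m))\<rceil> \<and>
           \<not> (\<exists>V EU. simple_graph V EU \<and> real (card V) \<le> 2 powr t \<and>
                 (\<forall>E\<in>M. induced_sub (2 * m) E V EU))"
proof -
  define G where "G = good_graphs (1/2 + \<delta>/2) (1/2) (8/\<delta>) (2 * m)"
  define L where "L = nat \<lfloor>2 powr t\<rfloor>"
  have "t \<ge> 0"
    unfolding t_def by simp
  note L = nat_floor_two_powr_bounds[OF this, folded L_def]
  have G_large: "2 * L ^ (2 * m) \<le> card G"
    using host_power_le_card_good_graphs[OF \<delta> m e_large e_small] unfolding G_def L_def t_def .
  have "finite G"
    unfolding G_def by (rule finite_good_graphs)
  have G_simple: "simple_graph {1..2 * m} E" if "E \<in> G" for E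
  proof -
    have "E \<subseteq> bip_edges (2 * m)"
      using that by (simp add: G_def good_graphs_def good_graph_def)
    then show ?thesis
      by (rule simple_graph_bip_edges)
  qed
  obtain M where M: "M \<subseteq> G" "card M \<le> L * L + 1"
    "\<not> (\<exists>V EU. simple_graph V EU \<and> card V \<le> L \<and> (\<forall>E\<in>M. induced_sub (2 * m) E V EU))"
    using exists_family_without_small_universal_graph[OF \<open>finite G\<close> G_simple L(1) G_large] by blast
  have "real (card M) \<le> real (L * L + 1)"
    using M(2) by (simp only: of_nat_le_iff)
  also have "\<dots> = real L ^ 2 + 1"
    by (simp add: power2_eq_square)
  also have "\<dots> \<le> 2 powr (2 * t + 1)"
    by (rule L(3))
  also have "\<dots> \<le> 2 powr sqrt (real (2 * m))"
    by (rule powr_mono[OF t_small]) simp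
  finally have "real (card M) \<le> real_of_int \<lceil>2 powr sqrt (real (2 * m))\<rceil>"
    by linarith
  moreover have "\<not> (\<exists>V EU. simple_graph V EU \<and> real (card V) \<le> 2 powr t \<and>
                    (\<forall>E\<in>M. induced_sub (2 * m) E V EU))"
    using M(3) unfolding L_def by (auto simp: le_nat_floor)
  ultimately show ?thesis
    using M(1) unfolding G_def by blast
qed

theorem mainTheorem5:
  fixes \<delta> :: real
  assumes "0 < \<delta>" and "\<delta> < 1"
  shows "\<exists>N. \<forall>n\<ge>N. even n \<longrightarrow>
    (\<exists>M. M \<subseteq> good_graphs (1/2 + \<delta>/2) (1/2) (8/\<delta>) n \<and>
         real (card M) \<le> real_of_int \<lceil>2 powr sqrt (real n)\<rceil> \<and>
         \<not> (\<exists>V EU. simple_graph V EU \<and>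
               real (card V) \<le> 2 powr (real n powr (1/2 - \<delta>)) \<and>
               (\<forall>E\<in>M. induced_sub n E V EU)))"
proof -
  have "eventually (\<lambda>m::nat. 16 \<le> m \<and>
      real (2 * m) powr (3/2 - \<delta>) + 3 \<le> real m powr (2 - (1/2 + \<delta>/2)) \<and>
      2 * real m powr (2 - (1/2 + \<delta>/2)) \<le> real m * real m) at_top"
    using assms by (intro eventually_conj eventually_ge_at_top) real_asymp+
  then obtain M0 where M0: "\<And>m. m \<ge> M0 \<Longrightarrow> 16 \<le> m \<and>
      real (2 * m) powr (3/2 - \<delta>) + 3 \<le> real m powr (2 - (1/2 + \<delta>/2)) \<and>
      2 * real m powr (2 - (1/2 + \<delta>/2)) \<le> real m * real m"
    unfolding eventually_at_top_linorder by blast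
  obtain N0 where N0: "\<And>n. n \<ge> N0 \<Longrightarrow> 2 * real n powr (1/2 - \<delta>) + 1 \<le> sqrt (real n)"
    using eventually_powr_sum_le_sqrt[OF assms(1)] unfolding eventually_at_top_linorder by blast
  show ?thesis
  proof (intro exI[of _ "max (2 * M0) N0"] allI impI)
    fix n :: nat
    assume "max (2 * M0) N0 \<le> n" "even n"
    then obtain m where "n = 2 * m" "m \<ge> M0" "n \<ge> N0"
      by (auto elim: evenE)
    then show "\<exists>M. M \<subseteq> good_graphs (1/2 + \<delta>/2) (1/2) (8/\<delta>) n \<and>
         real (card M) \<le> real_of_int \<lceil>2 powr sqrt (real n)\<rceil> \<and>
         \<not> (\<exists>V EU. simple_graph V EU \<and>
               real (card V) \<le> 2 powr (real n powr (1/2 - \<delta>)) \<and>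
               (\<forall>E\<in>M. induced_sub n E V EU))"
      using good_graphs_without_small_universal_graph[OF assms(1)] M0 N0 by presburger
  qed
qed

end
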